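(* Assume $f$ has a unique global maximizer $g$ and the problem contains no weak epistasis. For every $S\subseteq V$ and every assignment $R$ with $\mathcal C(R)=V\setminus\big(S\cup\mathcal{IN}(S)\cup\mathcal{IN}^2(S)\big)$, we have $g[s]\in\Psi_{\{(\mathcal{IN}(S)\setminus S,\,g)\}\cup R}[s]$ for all $s\in S$.
   Context: Fix $\ell\ge1$, loci $V=\{0,\dots,\ell-1\}$, chromosomes $\vec y\in\{0,1\}^V$, fitness $f:\{0,1\}^V\to\mathbb R$ (maximized) with unique global maximizer $g$. An assignment $A$ is a set of pairs $(v,a)$ ($v\in V$, $a\in\{0,1\}$) with at most one pair per locus; $A[v]=a$ if $(v,a)\in A$, else $A[v]=*$; coverage $\mathcal C(A)=\{v:A[v]\ne*\}$; for $T\subseteq V$, $\{(T,g)\}=\{(t,g[t]):t\in T\}$. $\Psi_A$ (constrained optima) is the set of chromosomes agreeing with $A$ on $\mathcal C(A)$ with maximum fitness among such chromosomes; $\Psi_A[v]=\{\psi_v:\psi\in\Psi_A\}$. Epistasis: for $v\in V$ and nonempty $S\subseteq V\setminus\{v\}$, $S\Rightarrow v$ iff for every $s\in S$ there exists an assignment $A$ with $\mathcal C(A)=S$ and $\Psi_A[v]\neq\Psi_{A\setminus\{(s,A[s])\}}[v]$; the empty set is never epistatic. An epistasis $S\Rightarrow v$ with $|S|\ge2$ is weak if no nonempty proper subset $T\subsetneq S$ has $T\Rightarrow v$; "no weak epistasis" means no epistasis is weak. $\mathcal{IN}(v)=\{u:\{u\}\Rightarrow v\}$, $\mathcal{IN}^2(v)=\{u:\exists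 w\in\mathcal{IN}(v),\ \{u\}\Rightarrow w\}$, and for $S\subseteq V$, $\mathcal{IN}(S)=\bigcup_{v\in S}\mathcal{IN}(v)$, $\mathcal{IN}^2(S)=\bigcup_{v\in S}\mathcal{IN}^2(v)$. *)

theory Defs
  imports Complex_Main
begin

text \<open>Loci are V = {0..<l}. A chromosome is a function nat => bool which is False
outside V (so the chromosomes correspond bijectively to {0,1}^V).
An assignment is a partial map nat => bool option (at most one value per locus);
its coverage C(A) is dom A.\<close>

definition chroms :: "nat \<Rightarrow> (nat \<Rightarrow> bool) set" where
  "chroms l = {y. \<forall>v. l \<le> v \<longrightarrow> y v = False}"

definition agrees :: "(nat \<Rightarrow> bool) \<Rightarrow> (nat \<Rightarrow> bool option) \<Rightarrow> bool" where
  "agrees y A \<longleftrightarrow> (\<forall>v\<in>dom A. A v = Some (y v))"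

definition Psi :: "nat \<Rightarrow> ((nat \<Rightarrow> bool) \<Rightarrow> real) \<Rightarrow> (nat \<Rightarrow> bool option) \<Rightarrow> (nat \<Rightarrow> bool) set" where
  "Psi l f A = {y \<in> chroms l. agrees y A \<and>
                 (\<forall>z \<in> chroms l. agrees z A \<longrightarrow> f z \<le> f y)}"

definition Psi_at :: "nat \<Rightarrow> ((nat \<Rightarrow> bool) \<Rightarrow> real) \<Rightarrow> (nat \<Rightarrow> bool option) \<Rightarrow> nat \<Rightarrow> bool set" where
  "Psi_at l f A v = (\<lambda>\<psi>. \<psi> v) ` Psi l f A"

definition assign_of :: "nat set \<Rightarrow> (nat \<Rightarrow> bool) \<Rightarrow> (nat \<Rightarrow> bool option)" where
  "assign_of T g = (\<lambda>t. if t \<in> T then Some (g t) else None)"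

text \<open>Epistasis S => v. Removing the pair (s, A[s]) from A is A(s := None).\<close>
definition epistatic :: "nat \<Rightarrow> ((nat \<Rightarrow> bool) \<Rightarrow> real) \<Rightarrow> nat set \<Rightarrow> nat \<Rightarrow> bool" where
  "epistatic l f S v \<longleftrightarrow>
     v \<in> {0..<l} \<and> S \<noteq> {} \<and> S \<subseteq> {0..<l} - {v} \<and>
     (\<forall>s\<in>S. \<exists>A. dom A = S \<and> Psi_at l f A v \<noteq> Psi_at l f (A(s := None)) v)"

definition weak_epistatic :: "nat \<Rightarrow> ((nat \<Rightarrow> bool) \<Rightarrow> real) \<Rightarrow> nat set \<Rightarrow> nat \<Rightarrow> bool" where
  "weak_epistatic l f S v \<longleftrightarrow>
     epistatic l f S v \<and> 2 \<le> card S \<and>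
     (\<forall>T. T \<noteq> {} \<longrightarrow> T \<subset> S \<longrightarrow> \<not> epistatic l f T v)"

definition no_weak_epistasis :: "nat \<Rightarrow> ((nat \<Rightarrow> bool) \<Rightarrow> real) \<Rightarrow> bool" where
  "no_weak_epistasis l f \<longleftrightarrow> (\<forall>S v. \<not> weak_epistatic l f S v)"

definition IN :: "nat \<Rightarrow> ((nat \<Rightarrow> bool) \<Rightarrow> real) \<Rightarrow> nat \<Rightarrow> nat set" where
  "IN l f v = {u. epistatic l f {u} v}"

definition IN2 :: "nat \<Rightarrow> ((nat \<Rightarrow> bool) \<Rightarrow> real) \<Rightarrow> nat \<Rightarrow> nat set" where
  "IN2 l f v = {u. \<exists>w \<in> IN l f v. epistatic l f {u} w}"

definition IN_set :: "nat \<Rightarrow> ((nat \<Rightarrow> bool) \<Rightarrow> real) \<Rightarrow> nat set \<Rightarrow> nat set" where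
  "IN_set l f S = (\<Union>v\<in>S. IN l f v)"

definition IN2_set :: "nat \<Rightarrow> ((nat \<Rightarrow> bool) \<Rightarrow> real) \<Rightarrow> nat set \<Rightarrow> nat set" where
  "IN2_set l f S = (\<Union>v\<in>S. IN2 l f v)"

definition unique_global_max :: "nat \<Rightarrow> ((nat \<Rightarrow> bool) \<Rightarrow> real) \<Rightarrow> (nat \<Rightarrow> bool) \<Rightarrow> bool" where
  "unique_global_max l f g \<longleftrightarrow> g \<in> chroms l \<and> (\<forall>y \<in> chroms l. y \<noteq> g \<longrightarrow> f y < f g)"

end

theory Submission
  imports Defs
begin

(* Without weak epistasis every epistasis T \<Rightarrow> v contains a single-locus epistasis {u} \<Rightarrow> v.
   So a constraint A fixing neither v nor any locus of IN(v) does not influence the optimal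
   values at v: removing its pairs one at a time never changes Psi_A[v], and without constraints
   the only optimum is g. R is such a constraint both for s in S and for t in IN(S) - S (since
   IN(t) \<subseteq> IN^2(S)). Hence some optimum psi of R has psi[s] = g[s] and agrees with g on
   IN(S) - S, which makes it an optimum under the stronger constraint {(IN(S) - S, g)} \<union> R. *)

lemma epistatic_singleton_subset:
  assumes "no_weak_epistasis l f" and "finite T" and "epistatic l f T v"
  shows "\<exists>u\<in>T. epistatic l f {u} v"
  using assms(2,3)
proof (induction "card T" arbitrary: T rule: less_induct)
  case less
  have "T \<noteq> {}" using less.prems(2) unfolding epistatic_def by blast
  show ?case
  proof (cases "2 \<le> card T")
    case True
    then have "\<not> weak_epistatic l f T v" using assms(1) unfolding no_weak_epistasis_def by blast
    then obtain T' where T': "T' \<noteq> {}" "T' \<subset> T" "epistatic l f T' v"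
      using True less.prems(2) unfolding weak_epistatic_def by blast
    have "card T' < card T" using T'(2) less.prems(1) by (rule psubset_card_mono[rotated])
    moreover have "finite T'" using T'(2) less.prems(1) finite_subset by blast
    ultimately obtain u where "u \<in> T'" "epistatic l f {u} v" using less.hyps T'(3) by blast
    then show ?thesis using T'(2) by blast
  next
    case False
    moreover have "card T \<noteq> 0" using \<open>T \<noteq> {}\<close> less.prems(1) by simp
    ultimately have "card T = 1" by linarith
    then obtain u where "T = {u}" by (rule card_1_singletonE)
    then show ?thesis using less.prems(2) by blast
  qed
qed

lemma Psi_empty:
  assumes "unique_global_max l f g"
  shows "Psi l f Map.empty = {g}"
  using assms unfolding Psi_def unique_global_max_def agrees_def
  by (force simp: less_imp_le)

lemma Psi_at_eq_global_max:
  assumes "no_weak_epistasis l f" and "unique_global_max l f g" and "v \<in> {0..<l}"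
    and "dom A \<subseteq> {0..<l}" and "v \<notin> dom A" and "dom A \<inter> IN l f v = {}"
  shows "Psi_at l f A v = {g v}"
  using assms(4-6)
proof (induction "card (dom A)" arbitrary: A rule: less_induct)
  case less
  show ?case
  proof (cases "dom A = {}")
    case True
    then show ?thesis using Psi_empty[OF assms(2)] unfolding Psi_at_def by simp
  next
    case False
    have fin: "finite (dom A)" using less.prems(1) finite_subset by blast
    have "\<not> epistatic l f (dom A) v"
      using epistatic_singleton_subset[OF assms(1) fin] less.prems(3) unfolding IN_def by blast
    then obtain s where s: "s \<in> dom A"
      and "\<forall>B. dom B = dom A \<longrightarrow> Psi_at l f B v = Psi_at l f (B(s := None)) v"
      using False assms(3) less.prems(1,2) unfolding epistatic_def by blast
    then have irrelevant: "Psi_at l f A v = Psi_at l f (A(s := None)) v" by blast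
    have "0 < card (dom A)" using s fin card_gt_0_iff by blast
    then have "card (dom (A(s := None))) < card (dom A)" using s fin by simp
    moreover have "dom (A(s := None)) \<subseteq> {0..<l}" "v \<notin> dom (A(s := None))"
      "dom (A(s := None)) \<inter> IN l f v = {}"
      using less.prems by auto
    ultimately have "Psi_at l f (A(s := None)) v = {g v}" by (rule less.hyps)
    then show ?thesis using irrelevant by simp
  qed
qed

lemma agrees_map_add: "agrees y A \<Longrightarrow> agrees y B \<Longrightarrow> agrees y (A ++ B)"
  unfolding agrees_def by (auto simp: map_add_Some_iff)

lemma agrees_assign_of: "agrees y (assign_of T g) \<longleftrightarrow> (\<forall>t\<in>T. y t = g t)"
  by (auto simp: agrees_def assign_of_def dom_def)

lemma agrees_map_le:
  assumes "R \<subseteq>\<^sub>m A" and "agrees y A"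
  shows "agrees y R"
  unfolding agrees_def
proof
  fix v assume v: "v \<in> dom R"
  then have "R v = A v" using assms(1) unfolding map_le_def by blast
  moreover have "v \<in> dom A" using v assms(1) map_le_implies_dom_le by blast
  ultimately show "R v = Some (y v)" using assms(2) unfolding agrees_def by simp
qed

lemma Psi_strengthen:
  assumes "\<psi> \<in> Psi l f R" and "R \<subseteq>\<^sub>m A" and "agrees \<psi> A"
  shows "\<psi> \<in> Psi l f A"
  using assms agrees_map_le unfolding Psi_def by blast

lemma IN_in_loci: "u \<in> IN l f v \<Longrightarrow> u \<in> {0..<l}"
  unfolding IN_def epistatic_def by auto

theorem theorem4:
  fixes l :: nat and f :: "(nat \<Rightarrow> bool) \<Rightarrow> real" and g :: "nat \<Rightarrow> bool"
    and S :: "nat set" and R :: "nat \<Rightarrow> bool option"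
  assumes "1 \<le> l"
    and "unique_global_max l f g"
    and "no_weak_epistasis l f"
    and "S \<subseteq> {0..<l}"
    and "dom R = {0..<l} - (S \<union> IN_set l f S \<union> IN2_set l f S)"
  shows "\<forall>s\<in>S. g s \<in> Psi_at l f (assign_of (IN_set l f S - S) g ++ R) s"
proof
  fix s assume "s \<in> S"
  have dom_R: "dom R \<subseteq> {0..<l}" using assms(5) by blast
  have R_free: "Psi_at l f R v = {g v}"
    if "v \<in> {0..<l}" "v \<notin> dom R" "dom R \<inter> IN l f v = {}" for v
    by (rule Psi_at_eq_global_max[OF assms(3,2) that(1) dom_R that(2,3)])
  have "IN l f s \<subseteq> IN_set l f S" using \<open>s \<in> S\<close> unfolding IN_set_def by blast
  then have "Psi_at l f R s = {g s}"
    using \<open>s \<in> S\<close> assms(4,5) by (intro R_free) auto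
  then have "g s \<in> (\<lambda>\<psi>. \<psi> s) ` Psi l f R" unfolding Psi_at_def by simp
  then obtain \<psi> where \<psi>: "\<psi> \<in> Psi l f R" "g s = \<psi> s" by blast
  have "\<psi> t = g t" if t: "t \<in> IN_set l f S - S" for t
  proof -
    obtain s0 where "s0 \<in> S" "t \<in> IN l f s0" using t unfolding IN_set_def by blast
    then have "IN l f t \<subseteq> IN2_set l f S" unfolding IN2_set_def IN2_def IN_def by blast
    then have "Psi_at l f R t = {g t}"
      using IN_in_loci[OF \<open>t \<in> IN l f s0\<close>] t assms(5) by (intro R_free) auto
    moreover have "\<psi> t \<in> Psi_at l f R t" unfolding Psi_at_def using \<psi>(1) by (rule imageI)
    ultimately show ?thesis by simp
  qed
  moreover have "agrees \<psi> R" using \<psi>(1) unfolding Psi_def by blast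
  ultimately have "agrees \<psi> (assign_of (IN_set l f S - S) g ++ R)"
    by (simp add: agrees_map_add agrees_assign_of)
  then have "\<psi> \<in> Psi l f (assign_of (IN_set l f S - S) g ++ R)"
    by (rule Psi_strengthen[OF \<psi>(1) map_le_map_add])
  then show "g s \<in> Psi_at l f (assign_of (IN_set l f S - S) g ++ R) s"
    unfolding Psi_at_def \<psi>(2) by (rule imageI)
qed

end
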